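(* Let $\mathscr{A}=\{A_1,\ldots,A_r\}$ be an irreducible set of real $d\times d$ matrices, let $\|\cdot\|$ be any norm on $\mathbb{R}^d$, and let $\chi_p(\mathscr{A})$ denote the $p$-measure of irreducibility with respect to this norm. Then for every integer $n\ge 1$ and every integer $p\ge d-1$, \[ \rho(\mathscr{A})\le \|\mathscr{A}^n\|^{1/n}\le \big(\eta_p(\mathscr{A})\big)^{1/n}\rho(\mathscr{A}),\qquad\text{where }\ \eta_p(\mathscr{A})=\frac{\max\{1,\rho(\mathscr{A})^p\}}{\chi_p(\mathscr{A})}, \] and consequently \[ \big(\nu_p(\mathscr{A})\big)^{-1/n}\|\mathscr{A}^n\|^{1/n}\le \rho(\mathscr{A})\le \|\mathscr{A}^n\|^{1/n},\qquad\text{where }\ \nu_p(\mathscr{A})=\frac{\max\{1,\|\mathscr{A}\|^p\}}{\chi_p(\mathscr{A})}. \]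
   Context: A finite set $\mathscr{A}$ of real $d\times d$ matrices is irreducible if the matrices in $\mathscr{A}$ have no common invariant subspace other than $\{0\}$ and $\mathbb{R}^d$. For $n\ge1$, $\mathscr{A}^n$ is the set of all products $A_{i_n}\cdots A_{i_1}$ with $A_{i_j}\in\mathscr{A}$, and $\mathscr{A}^0=\{I\}$. For a norm $\|\cdot\|$ on $\mathbb{R}^d$, matrices carry the induced operator norm and $\|\mathscr{A}^n\|=\max_{A\in\mathscr{A}^n}\|A\|$ (in particular $\|\mathscr{A}\|=\max_i\|A_i\|$). The joint spectral radius is $\rho(\mathscr{A})=\limsup_{n\to\infty}\|\mathscr{A}^n\|^{1/n}$ (independent of the norm). For $p\ge1$, $\mathscr{A}_p=\bigcup_{k=0}^p\mathscr{A}^k$, and $\mathscr{A}_p(x)=\{Ax: A\in\mathscr{A}_p\}$. $\mathbf{S}(t)$ is the closed ball of radius $t$ centered at $0$ in the norm $\|\cdot\|$. The $p$-measure of irreducibility of $\mathscr{A}$ with respect to $\|\cdot\|$ is \[ \chi_p(\mathscr{A})=\inf_{x\in\mathbb{R}^d,\ \|x\|=1}\ \sup\{t\ge 0:\ \mathbf{S}(t)\subseteq \mathrm{conv}(\mathscr{A}_p(x)\cup\mathscr{A}_p(-x))\}. \] (For $p\ge d-1$, $\chi_p(\mathscr{A})>0$ if and only if $\mathscr{A}$ is irreducible.) *)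

theory Defs
  imports "HOL-Analysis.Analysis" "HOL-Library.Liminf_Limsup"
begin

definition is_norm :: "(real^'d \<Rightarrow> real) \<Rightarrow> bool" where
  "is_norm N \<longleftrightarrow> (\<forall>x. N x = 0 \<longleftrightarrow> x = 0) \<and>
     (\<forall>c x. N (c *\<^sub>R x) = \<bar>c\<bar> * N x) \<and>
     (\<forall>x y. N (x + y) \<le> N x + N y)"

definition opnorm :: "(real^'d \<Rightarrow> real) \<Rightarrow> real^'d^'d \<Rightarrow> real" where
  "opnorm N M = (SUP x\<in>{x. N x = 1}. N (M *v x))"

definition irreducible_set :: "(real^'d^'d) set \<Rightarrow> bool" where
  "irreducible_set \<A> \<longleftrightarrow> (\<forall>V. subspace V \<and> (\<forall>A\<in>\<A>. \<forall>x\<in>V. A *v x \<in> V)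
       \<longrightarrow> V = {0} \<or> V = UNIV)"

fun prods :: "(real^'d^'d) set \<Rightarrow> nat \<Rightarrow> (real^'d^'d) set" where
  "prods \<A> 0 = {mat 1}"
| "prods \<A> (Suc n) = {B ** P | B P. B \<in> \<A> \<and> P \<in> prods \<A> n}"

definition setnorm :: "(real^'d \<Rightarrow> real) \<Rightarrow> (real^'d^'d) set \<Rightarrow> nat \<Rightarrow> real" where
  "setnorm N \<A> n = Max (opnorm N ` prods \<A> n)"

definition jsr :: "(real^'d \<Rightarrow> real) \<Rightarrow> (real^'d^'d) set \<Rightarrow> real" where
  "jsr N \<A> = real_of_ereal (limsup (\<lambda>n. ereal (setnorm N \<A> n powr (1 / real n))))"

definition prods_upto :: "(real^'d^'d) set \<Rightarrow> nat \<Rightarrow> (real^'d^'d) set" where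
  "prods_upto \<A> p = (\<Union>k\<in>{0..p}. prods \<A> k)"

definition chi :: "(real^'d \<Rightarrow> real) \<Rightarrow> (real^'d^'d) set \<Rightarrow> nat \<Rightarrow> real" where
  "chi N \<A> p = (INF x\<in>{x. N x = 1}.
      Sup {t. t \<ge> 0 \<and> {y. N y \<le> t} \<subseteq>
        convex hull ((\<lambda>A. A *v x) ` prods_upto \<A> p \<union> (\<lambda>A. A *v (- x)) ` prods_upto \<A> p)})"

end

theory Submission
  imports Defs
begin

text \<open>
  Write \<open>\<parallel>\<A>\<^sup>n\<parallel>\<close> for \<open>setnorm N \<A> n\<close>, \<open>\<rho>\<close> for \<open>jsr N \<A>\<close> and \<open>\<chi>\<close> for \<open>chi N \<A> p\<close>.
  The lower bound \<open>\<rho> \<le> \<parallel>\<A>\<^sup>n\<parallel>\<^bsup>1/n\<^esup>\<close> is the elementary half of Fekete's lemma for the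
  submultiplicative sequence \<open>\<parallel>\<A>\<^sup>n\<parallel>\<close>.  The upper bound rests on one geometric fact:
  for every product \<open>C\<close> and every unit vector \<open>x\<close> some \<open>A \<in> \<A>\<^sub>p\<close> satisfies
  \<open>\<chi> \<parallel>C\<parallel> \<le> N (C A x)\<close>, because the ball of radius \<open>\<chi>\<close> lies in the convex hull of
  \<open>\<A>\<^sub>p(x) \<union> \<A>\<^sub>p(-x)\<close>, on which the convex function \<open>v \<mapsto> N (C v)\<close> peaks at a vertex.
  Iterating this with \<open>C\<close> a norm-maximising product of length \<open>n\<close> yields, for every \<open>j\<close>,
  a length \<open>L \<in> [j n, j (n + p)]\<close> with \<open>(\<chi> \<parallel>\<A>\<^sup>n\<parallel>)\<^sup>j \<le> \<parallel>\<A>\<^sup>L\<parallel>\<close>, hence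
  \<open>\<chi> \<parallel>\<A>\<^sup>n\<parallel> \<le> \<rho>\<^sup>n max 1 \<rho>\<^sup>p\<close>.  Finally, irreducibility with \<open>p \<ge> d - 1\<close> makes the orbit
  \<open>\<A>\<^sub>p(x)\<close> span \<open>\<real>\<^sup>d\<close> (a Krylov-type argument), which by compactness and a separating
  hyperplane gives \<open>\<chi> > 0\<close>.
\<close>

section \<open>Norms on \<open>\<real>\<^sup>d\<close> and induced operator norms\<close>

locale vec_norm =
  fixes N :: "real^'d \<Rightarrow> real"
  assumes is_norm: "is_norm N"
begin

lemma N_eq_0_iff [simp]: "N x = 0 \<longleftrightarrow> x = 0"
  using is_norm unfolding is_norm_def by auto

lemma N_zero [simp]: "N 0 = 0"
  by simp

lemma N_scaleR: "N (c *\<^sub>R x) = \<bar>c\<bar> * N x"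
  using is_norm unfolding is_norm_def by auto

lemma N_triangle: "N (x + y) \<le> N x + N y"
  using is_norm unfolding is_norm_def by auto

lemma N_minus [simp]: "N (- x) = N x"
  using N_scaleR[of "-1" x] by simp

lemma N_nonneg: "N x \<ge> 0"
  using N_triangle[of x "- x"] by simp

lemma N_pos: "x \<noteq> 0 \<Longrightarrow> N x > 0"
  using N_nonneg[of x] N_eq_0_iff[of x] by linarith

lemma N_normalize: "x \<noteq> 0 \<Longrightarrow> N ((1 / N x) *\<^sub>R x) = 1"
  using N_pos[of x] by (simp add: N_scaleR)

lemma N_sum: "finite S \<Longrightarrow> N (sum f S) \<le> (\<Sum>i\<in>S. N (f i))"
  by (induction S rule: finite_induct) (auto intro: order_trans[OF N_triangle])

lemma unit_vector_exists: "\<exists>x. N x = 1"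
proof -
  have "(1::real^'d) \<noteq> 0" by (simp add: vec_eq_iff)
  thus ?thesis using N_normalize by blast
qed

text \<open>\<open>N\<close> is dominated by the Euclidean norm (expand in the standard basis) \<dots>\<close>

lemma N_le_norm: "\<exists>B>0. \<forall>x. N x \<le> B * norm x"
proof (intro exI conjI allI)
  let ?B = "(\<Sum>b\<in>Basis. N b) + 1"
  show "?B > 0" using N_nonneg by (simp add: add_nonneg_pos sum_nonneg)
  fix x :: "real^'d"
  have "N x = N (\<Sum>b\<in>Basis. inner x b *\<^sub>R b)" by (simp add: euclidean_representation)
  also have "\<dots> \<le> (\<Sum>b\<in>Basis. \<bar>inner x b\<bar> * N b)" by (rule order_trans[OF N_sum]) (simp_all add: N_scaleR)
  also have "\<dots> \<le> (\<Sum>b\<in>Basis. norm x * N b)"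
    by (rule sum_mono) (simp add: Basis_le_norm N_nonneg mult_right_mono)
  also have "\<dots> \<le> ?B * norm x"
    by (simp add: sum_distrib_left[symmetric] sum_distrib_right[symmetric] algebra_simps)
  finally show "N x \<le> ?B * norm x" .
qed

lemma continuous_on_N: "continuous_on S N"
proof -
  obtain B where B: "B > 0" "\<And>x. N x \<le> B * norm x" using N_le_norm by blast
  have "\<bar>N x - N y\<bar> \<le> B * dist x y" for x y
    using N_triangle[of "x - y" y] N_triangle[of "y - x" x] N_minus[of "x - y"] B(2)[of "x - y"]
    by (simp add: abs_le_iff dist_norm)
  hence "B-lipschitz_on S N" using B(1) by (intro lipschitz_onI) (auto simp: dist_real_def)
  thus ?thesis by (rule lipschitz_on_continuous_on)
qed

text \<open>\<dots> and, by compactness of the Euclidean sphere, it dominates a multiple of it.\<close>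

lemma norm_le_N: "\<exists>a>0. \<forall>x. a * norm x \<le> N x"
proof -
  have "sphere (0::real^'d) 1 \<noteq> {}" by simp
  then obtain x0 where x0: "x0 \<in> sphere 0 1" "\<forall>y\<in>sphere 0 1. N x0 \<le> N y"
    using continuous_attains_inf[OF compact_sphere _ continuous_on_N] by blast
  have "N x0 * norm x \<le> N x" for x :: "real^'d"
  proof (cases "x = 0")
    case False
    hence "N x0 \<le> N ((1 / norm x) *\<^sub>R x)" using x0 by simp
    thus ?thesis using False by (simp add: N_scaleR field_simps)
  qed simp
  moreover have "N x0 > 0" using x0 by (intro N_pos) auto
  ultimately show ?thesis by blast
qed

lemma compact_unit_sphere: "compact {x. N x = 1}"
proof -
  obtain a where a: "a > 0" "\<And>x. a * norm x \<le> N x" using norm_le_N by blast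
  have "norm x \<le> 1 / a" if "N x = 1" for x using a(1) a(2)[of x] that by (simp add: field_simps)
  hence "bounded {x. N x = 1}" unfolding bounded_iff by blast
  moreover have "closed {x. N x = 1}" by (rule closed_Collect_eq) (auto intro: continuous_on_N)
  ultimately show ?thesis by (simp add: compact_eq_bounded_closed)
qed

text \<open>
  Basic properties of the operator norm \<open>opnorm N\<close>; the supremum defining it is over the
  compact \<open>N\<close>-unit sphere, hence finite.
\<close>

lemma opnorm_bdd: "bdd_above ((\<lambda>x. N (M *v x)) ` {x. N x = 1})"
proof -
  have "continuous_on {x. N x = 1} (\<lambda>x. N (M *v x))"
    by (intro continuous_on_compose2[OF continuous_on_N] linear_continuous_on
        matrix_vector_mul_bounded_linear) auto
  thus ?thesis using compact_unit_sphere
    by (intro bounded_imp_bdd_above compact_imp_bounded compact_continuous_image)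
qed

lemma opnorm_ge: "N x = 1 \<Longrightarrow> N (M *v x) \<le> opnorm N M"
  unfolding opnorm_def by (rule cSUP_upper[OF _ opnorm_bdd]) simp

lemma opnorm_le: "(\<And>x. N x = 1 \<Longrightarrow> N (M *v x) \<le> c) \<Longrightarrow> opnorm N M \<le> c"
  unfolding opnorm_def using unit_vector_exists by (intro cSUP_least) auto

lemma opnorm_nonneg: "opnorm N M \<ge> 0"
  using unit_vector_exists opnorm_ge[of _ M] N_nonneg by (meson order_trans)

lemma opnorm_apply: "N (M *v x) \<le> opnorm N M * N x"
proof (cases "x = 0")
  case False
  have "N (M *v ((1 / N x) *\<^sub>R x)) \<le> opnorm N M" by (rule opnorm_ge[OF N_normalize[OF False]])
  thus ?thesis using N_pos[OF False] by (simp add: matrix_vector_mult_scaleR N_scaleR field_simps)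
qed (simp add: N_nonneg)

lemma opnorm_mult: "opnorm N (P ** Q) \<le> opnorm N P * opnorm N Q"
proof (rule opnorm_le)
  fix x assume "N x = 1"
  have "N ((P ** Q) *v x) \<le> opnorm N P * N (Q *v x)"
    unfolding matrix_vector_mul_assoc[symmetric] by (rule opnorm_apply)
  also have "\<dots> \<le> opnorm N P * opnorm N Q"
    using opnorm_ge[OF \<open>N x = 1\<close>] opnorm_nonneg by (rule mult_left_mono)
  finally show "N ((P ** Q) *v x) \<le> opnorm N P * opnorm N Q" .
qed

lemma opnorm_id: "opnorm N (mat 1) = 1"
proof (rule antisym)
  show "opnorm N (mat 1) \<le> 1" by (rule opnorm_le) simp
  obtain x where "N x = 1" using unit_vector_exists by blast
  thus "1 \<le> opnorm N (mat 1)" using opnorm_ge[of x "mat 1"] by simp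
qed

end

lemma prods_add: "prods \<A> (a + b) = {C ** P | C P. C \<in> prods \<A> a \<and> P \<in> prods \<A> b}"
proof (induction a)
  case 0
  show ?case by (auto simp: matrix_mul_lid)
next
  case (Suc a)
  have "prods \<A> (Suc a + b) = {D ** (C ** P) | D C P. D \<in> \<A> \<and> C \<in> prods \<A> a \<and> P \<in> prods \<A> b}"
    using Suc.IH by auto
  also have "\<dots> = {C ** P | C P. C \<in> prods \<A> (Suc a) \<and> P \<in> prods \<A> b}"
    by (auto simp: matrix_mul_assoc)
  finally show ?case .
qed

lemma finite_prods: "finite \<A> \<Longrightarrow> finite (prods \<A> k)"
proof (induction k)
  case (Suc k)
  have "prods \<A> (Suc k) = (\<lambda>(B, P). B ** P) ` (\<A> \<times> prods \<A> k)" by auto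
  thus ?case using Suc by simp
qed simp

lemma prods_nonempty: "\<A> \<noteq> {} \<Longrightarrow> prods \<A> k \<noteq> {}"
  by (induction k) auto

lemma finite_prods_upto: "finite \<A> \<Longrightarrow> finite (prods_upto \<A> p)"
  unfolding prods_upto_def using finite_prods by blast

lemma id_in_prods_upto: "mat 1 \<in> prods_upto \<A> p"
  unfolding prods_upto_def by force

lemma matrix_vector_mult_uminus: "(A::real^'n^'m) *v (- x) = - (A *v x)"
  by (metis scaleR_minus1_left matrix_vector_mult_scaleR)

section \<open>Submultiplicative sequences\<close>

lemma power_powr_inverse: "0 \<le> (q::real) \<Longrightarrow> n > 0 \<Longrightarrow> (q ^ n) powr (1 / real n) = q"
  by (simp add: powr_realpow'[symmetric] powr_powr)

lemma limsup_le_of_eventually_le: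
  assumes "eventually (\<lambda>n. f n \<le> g n) sequentially" "(g \<longlongrightarrow> c) sequentially"
  shows "limsup (\<lambda>n. ereal (f n)) \<le> ereal c"
proof -
  have "limsup (\<lambda>n. ereal (f n)) \<le> limsup (\<lambda>n. ereal (g n))"
    using assms(1) by (intro Limsup_mono) (auto elim: eventually_mono)
  also have "limsup (\<lambda>n. ereal (g n)) = ereal c"
    using assms(2) by (intro lim_imp_Limsup) auto
  finally show ?thesis .
qed

lemma limsup_ge_of_frequently_ge:
  assumes "\<And>M. \<exists>L\<ge>M. c \<le> f L"
  shows "ereal c \<le> limsup (\<lambda>n. ereal (f n))"
  unfolding limsup_INF_SUP
proof (rule INF_greatest)
  fix M :: nat
  obtain L where "L \<ge> M" "c \<le> f L" using assms by blast
  thus "ereal c \<le> (SUP m\<in>{M..}. ereal (f m))" by (intro SUP_upper2[of L]) auto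
qed

locale submult_seq =
  fixes f :: "nat \<Rightarrow> real"
  assumes nonneg: "f k \<ge> 0"
    and submult: "f (a + b) \<le> f a * f b"
    and at_0: "f 0 \<le> 1"
begin

lemma power_bound: "f (k * n) \<le> f n ^ k"
proof (induction k)
  case (Suc k)
  have "f (Suc k * n) \<le> f n * f (k * n)" using submult[of n "k * n"] by simp
  also have "\<dots> \<le> f n * f n ^ k" using Suc nonneg by (intro mult_left_mono) auto
  finally show ?case by simp
qed (simp add: at_0)

text \<open>Writing \<open>L = k n + r\<close> with \<open>r < n\<close> gives \<open>f L \<le> \<sigma>\<^sup>L E\<close> for \<open>\<sigma> = f n\<^bsup>1/n\<^esup>\<close> and a constant \<open>E\<close>.\<close>

lemma root_bound:
  assumes "n \<ge> 1" "f n > 0" "n \<le> L"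
  defines "\<sigma> \<equiv> f n powr (1 / real n)"
  defines "E \<equiv> max 1 (f 1 / \<sigma>) ^ n"
  shows "f L powr (1 / real L) \<le> \<sigma> * E powr (1 / real L)"
proof -
  define k r where "k = L div n" and "r = L mod n"
  have L_eq: "L = k * n + r" and r_lt: "r < n" unfolding k_def r_def using assms(1) by simp_all
  have \<sigma>_pos: "\<sigma> > 0" unfolding \<sigma>_def using assms(2) by simp
  have fn_eq: "f n = \<sigma> ^ n"
    unfolding \<sigma>_def using assms(1,2) by (simp add: powr_realpow[symmetric] powr_powr)
  have fkn: "f (k * n) \<le> \<sigma> ^ (k * n)"
    using power_bound[of k n] by (simp add: fn_eq power_mult[symmetric] mult.commute)
  have "f L \<le> f (k * n) * f r" unfolding L_eq by (rule submult)
  also have "\<dots> \<le> \<sigma> ^ (k * n) * f 1 ^ r"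
    using fkn power_bound[of r 1] nonneg \<sigma>_pos by (intro mult_mono) auto
  also have "\<dots> = \<sigma> ^ L * (f 1 / \<sigma>) ^ r"
    unfolding L_eq using \<sigma>_pos by (simp add: power_add power_divide)
  also have "\<dots> \<le> \<sigma> ^ L * E"
  proof (intro mult_left_mono)
    have "(f 1 / \<sigma>) ^ r \<le> max 1 (f 1 / \<sigma>) ^ r"
      using \<sigma>_pos nonneg by (intro power_mono) auto
    also have "\<dots> \<le> E" unfolding E_def using r_lt by (intro power_increasing) auto
    finally show "(f 1 / \<sigma>) ^ r \<le> E" .
  qed (use \<sigma>_pos in simp)
  finally have "f L powr (1 / real L) \<le> (\<sigma> ^ L * E) powr (1 / real L)"
    using nonneg by (intro powr_mono2) auto
  also have "\<dots> = \<sigma> * E powr (1 / real L)"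
    using \<sigma>_pos assms(1,3) by (simp add: powr_mult power_powr_inverse)
  finally show ?thesis .
qed

lemma limsup_root_le:
  assumes "n \<ge> 1"
  shows "limsup (\<lambda>L. ereal (f L powr (1 / real L))) \<le> ereal (f n powr (1 / real n))"
proof (cases "f n = 0")
  case True
  have "f L = 0" if "n \<le> L" for L
    using submult[of n "L - n"] nonneg[of L] that True by simp
  hence "eventually (\<lambda>L. f L powr (1 / real L) \<le> 0) sequentially"
    unfolding eventually_sequentially by auto
  thus ?thesis using True by (intro limsup_le_of_eventually_le) auto
next
  case False
  define \<sigma> where "\<sigma> = f n powr (1 / real n)"
  define E where "E = max 1 (f 1 / \<sigma>) ^ n"
  have "eventually (\<lambda>L. f L powr (1 / real L) \<le> \<sigma> * E powr (1 / real L)) sequentially"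
    using root_bound[OF assms] False nonneg[of n] unfolding \<sigma>_def E_def eventually_sequentially
    by (metis order_less_le)
  moreover have "((\<lambda>L. \<sigma> * E powr (1 / real L)) \<longlongrightarrow> \<sigma>) sequentially"
  proof -
    have "E \<ge> 1" unfolding E_def by simp
    hence "((\<lambda>L. \<sigma> * E powr (1 / real L)) \<longlongrightarrow> \<sigma> * E powr 0) sequentially"
      by (intro tendsto_intros) auto
    thus ?thesis using \<open>E \<ge> 1\<close> by simp
  qed
  ultimately show ?thesis unfolding \<sigma>_def by (rule limsup_le_of_eventually_le)
qed

lemma limsup_root_nonneg: "0 \<le> limsup (\<lambda>L. ereal (f L powr (1 / real L)))"
proof -
  have "ereal 0 \<le> limsup (\<lambda>L. ereal (f L powr (1 / real L)))"
    by (rule limsup_ge_of_frequently_ge) auto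
  thus ?thesis by (simp add: zero_ereal_def)
qed

end

locale matrix_family = vec_norm N
  for N :: "real^'d \<Rightarrow> real" +
  fixes \<A> :: "(real^'d^'d) set"
  assumes finite_family: "finite \<A>" and nonempty_family: "\<A> \<noteq> {}"
begin

lemma setnorm_attained: "\<exists>C\<in>prods \<A> k. setnorm N \<A> k = opnorm N C"
proof -
  have "Max (opnorm N ` prods \<A> k) \<in> opnorm N ` prods \<A> k"
    using finite_prods[OF finite_family] prods_nonempty[OF nonempty_family] by (intro Max_in) auto
  thus ?thesis unfolding setnorm_def by auto
qed

lemma setnorm_ge: "C \<in> prods \<A> k \<Longrightarrow> opnorm N C \<le> setnorm N \<A> k"
  unfolding setnorm_def using finite_prods[OF finite_family] by auto

lemma setnorm_nonneg: "setnorm N \<A> k \<ge> 0"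
  using setnorm_attained[of k] opnorm_nonneg by auto

lemma setnorm_mult: "setnorm N \<A> (a + b) \<le> setnorm N \<A> a * setnorm N \<A> b"
proof -
  obtain D where D: "D \<in> prods \<A> (a + b)" "setnorm N \<A> (a + b) = opnorm N D"
    using setnorm_attained by blast
  then obtain C P where CP: "D = C ** P" "C \<in> prods \<A> a" "P \<in> prods \<A> b"
    unfolding prods_add by blast
  have "opnorm N D \<le> opnorm N C * opnorm N P" using CP opnorm_mult by simp
  also have "\<dots> \<le> setnorm N \<A> a * setnorm N \<A> b"
    using CP setnorm_ge opnorm_nonneg setnorm_nonneg by (intro mult_mono) auto
  finally show ?thesis using D by simp
qed

sublocale setnorm: submult_seq "setnorm N \<A>"
proof
  show "setnorm N \<A> 0 \<le> 1" by (simp add: setnorm_def opnorm_id)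
qed (rule setnorm_nonneg, rule setnorm_mult)

text \<open>The \<open>limsup\<close> defining \<open>\<rho>\<close> is finite, lying between \<open>0\<close> and \<open>\<parallel>\<A>\<parallel>\<close>.\<close>

lemma jsr_limsup: "limsup (\<lambda>L. ereal (setnorm N \<A> L powr (1 / real L))) = ereal (jsr N \<A>)"
proof -
  have "limsup (\<lambda>L. ereal (setnorm N \<A> L powr (1 / real L))) \<le> ereal (setnorm N \<A> 1)"
    using setnorm.limsup_root_le[of 1] setnorm_nonneg[of 1] by simp
  thus ?thesis using setnorm.limsup_root_nonneg unfolding jsr_def
    by (cases "limsup (\<lambda>L. ereal (setnorm N \<A> L powr (1 / real L)))") auto
qed

lemma jsr_nonneg: "jsr N \<A> \<ge> 0"
  using setnorm.limsup_root_nonneg by (simp add: jsr_limsup)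

lemma jsr_le_root: "n \<ge> 1 \<Longrightarrow> jsr N \<A> \<le> setnorm N \<A> n powr (1 / real n)"
  using setnorm.limsup_root_le by (simp add: jsr_limsup)

lemma jsr_le_setnorm_1: "jsr N \<A> \<le> setnorm N \<A> 1"
  using jsr_le_root[of 1] setnorm_nonneg[of 1] by simp

lemma jsr_ge_of_frequently_ge:
  "(\<And>M. \<exists>L\<ge>M. c \<le> setnorm N \<A> L powr (1 / real L)) \<Longrightarrow> c \<le> jsr N \<A>"
  using limsup_ge_of_frequently_ge[of c "\<lambda>L. setnorm N \<A> L powr (1 / real L)"]
  by (simp add: jsr_limsup)

end

section \<open>Irreducibility: orbits of length \<open>d - 1\<close> span the space\<close>

definition orbit :: "(real^'d^'d) set \<Rightarrow> nat \<Rightarrow> real^'d \<Rightarrow> (real^'d) set" where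
  "orbit \<A> p x = (\<lambda>A. A *v x) ` prods_upto \<A> p"

lemma orbit_mono: "k \<le> k' \<Longrightarrow> orbit \<A> k x \<subseteq> orbit \<A> k' x"
  unfolding orbit_def prods_upto_def by (intro image_mono UN_mono) auto

lemma in_orbit: "x \<in> orbit \<A> k x"
  unfolding orbit_def using id_in_prods_upto by force

lemma orbit_step: "B \<in> \<A> \<Longrightarrow> (\<lambda>v. B *v v) ` orbit \<A> k x \<subseteq> orbit \<A> (Suc k) x"
proof
  fix w assume B: "B \<in> \<A>" and "w \<in> (\<lambda>v. B *v v) ` orbit \<A> k x"
  then obtain C j where "w = B *v (C *v x)" "C \<in> prods \<A> j" "j \<le> k"
    unfolding orbit_def prods_upto_def by auto
  hence "w = (B ** C) *v x" "B ** C \<in> prods \<A> (Suc j)" "Suc j \<le> Suc k"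
    using B by (auto simp: matrix_vector_mul_assoc)
  thus "w \<in> orbit \<A> (Suc k) x" unfolding orbit_def prods_upto_def by force
qed

lemma stable_orbit_span_invariant:
  assumes "span (orbit \<A> (Suc k) x) = span (orbit \<A> k x)" "B \<in> \<A>" "v \<in> span (orbit \<A> k x)"
  shows "B *v v \<in> span (orbit \<A> k x)"
proof -
  have "B *v v \<in> (\<lambda>v. B *v v) ` span (orbit \<A> k x)" using assms(3) by blast
  also have "\<dots> = span ((\<lambda>v. B *v v) ` orbit \<A> k x)"
    by (rule span_linear_image[symmetric]) (rule matrix_vector_mul_linear)
  also have "\<dots> \<subseteq> span (orbit \<A> (Suc k) x)" using orbit_step[OF assms(2)] by (rule span_mono)
  finally show ?thesis using assms(1) by simp
qed

text \<open>
  For irreducible \<open>\<A>\<close> the spans of the orbits grow strictly until they fill \<open>\<real>\<^sup>d\<close>,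
  which therefore happens after at most \<open>d - 1\<close> steps.
\<close>

lemma orbit_spans:
  assumes irr: "irreducible_set \<A>" and p: "CARD('d) - 1 \<le> p" and x: "(x::real^'d) \<noteq> 0"
  shows "span (orbit \<A> p x) = UNIV"
proof (rule ccontr)
  assume not_full: "span (orbit \<A> p x) \<noteq> UNIV"
  have grows: "dim (orbit \<A> k x) < dim (orbit \<A> (Suc k) x)" if "k \<le> p" for k
  proof -
    have "span (orbit \<A> k x) \<noteq> UNIV"
      using not_full span_mono[OF orbit_mono[OF that]] by auto
    moreover have "x \<in> span (orbit \<A> k x)" by (simp add: in_orbit span_base)
    ultimately have "span (orbit \<A> (Suc k) x) \<noteq> span (orbit \<A> k x)"
      using irr x stable_orbit_span_invariant[of \<A> k x] subspace_span
      unfolding irreducible_set_def by blast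
    moreover have "span (orbit \<A> k x) \<subseteq> span (orbit \<A> (Suc k) x)"
      by (intro span_mono orbit_mono) simp
    ultimately show ?thesis by (intro dim_psubset) auto
  qed
  have "k \<le> Suc p \<Longrightarrow> Suc k \<le> dim (orbit \<A> k x)" for k
  proof (induction k)
    case 0
    have "dim {x} \<le> dim (orbit \<A> 0 x)" using in_orbit by (intro dim_subset) auto
    thus ?case using x by simp
  next
    case (Suc k)
    thus ?case using grows[of k] by simp
  qed
  hence "Suc CARD('d) \<le> dim (orbit \<A> CARD('d) x)" using p by simp
  thus False using dim_subset_UNIV_cart[of "orbit \<A> CARD('d) x"] by simp
qed

section \<open>Positivity of the measure of irreducibility\<close>

text \<open>
  A symmetric polytope whose vertices \<open>\<plusminus>g i\<close> have, in every unit direction \<open>u\<close>,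
  total absolute projection at least \<open>\<delta>\<close> contains the Euclidean ball of radius
  \<open>\<delta> / card I\<close>: a point outside would be separated from the polytope by a hyperplane.
\<close>

lemma cball_in_symmetric_hull:
  fixes g :: "'i \<Rightarrow> 'a::euclidean_space"
  assumes I: "finite I" "I \<noteq> {}"
    and spread: "\<And>u. norm u = 1 \<Longrightarrow> \<delta> \<le> (\<Sum>i\<in>I. \<bar>inner u (g i)\<bar>)"
  shows "cball 0 (\<delta> / card I) \<subseteq> convex hull (g ` I \<union> (\<lambda>i. - g i) ` I)"
    (is "_ \<subseteq> ?K")
proof
  fix y :: 'a assume y: "y \<in> cball 0 (\<delta> / card I)"
  show "y \<in> ?K"
  proof (rule ccontr)
    assume "y \<notin> ?K"
    moreover have "closed ?K" using I by (intro compact_imp_closed finite_imp_compact_convex_hull) auto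
    ultimately obtain w b where wb: "inner w y < b" "\<forall>v\<in>?K. b < inner w v"
      using separating_hyperplane_closed_point[OF convex_convex_hull] by blast
    have vertices: "g i \<in> ?K" "- g i \<in> ?K" if "i \<in> I" for i
      using that by (simp_all add: hull_inc)
    have vertex: "\<bar>inner w (g i)\<bar> < - b" if "i \<in> I" for i
    proof -
      have "b < inner w (g i)" "b < - inner w (g i)" using wb(2) vertices[OF that] by auto
      thus ?thesis by (simp add: abs_less_iff)
    qed
    obtain i0 where "i0 \<in> I" using I by blast
    hence "(1/2) *\<^sub>R g i0 + (1/2) *\<^sub>R (- g i0) \<in> ?K"
      using vertices by (intro convexD[OF convex_convex_hull]) auto
    hence "b < inner w 0" using wb(2) by (simp del: inner_zero_right)
    hence "b < 0" by simp
    hence "w \<noteq> 0" using wb(1) by auto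
    have "\<delta> * norm w \<le> (\<Sum>i\<in>I. \<bar>inner w (g i)\<bar>)"
      using spread[of "(1 / norm w) *\<^sub>R w"] \<open>w \<noteq> 0\<close>
      by (simp add: sum_divide_distrib[symmetric] field_simps)
    also have "\<dots> < (\<Sum>i\<in>I. - b)" using I vertex by (intro sum_strict_mono) auto
    also have "\<dots> \<le> card I * \<bar>inner w y\<bar>" using wb(1) \<open>b < 0\<close> by (simp add: mult_left_mono)
    also have "\<dots> \<le> card I * (norm w * norm y)" by (simp add: Cauchy_Schwarz_ineq2 mult_left_mono)
    also have "\<dots> \<le> \<delta> * norm w"
      using y I \<open>w \<noteq> 0\<close> by (simp add: field_simps mult_left_mono card_gt_0_iff)
    finally show False by simp
  qed
qed

definition sym_hull :: "(real^'d^'d) set \<Rightarrow> nat \<Rightarrow> real^'d \<Rightarrow> (real^'d) set" where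
  "sym_hull \<A> p x = convex hull (orbit \<A> p x \<union> orbit \<A> p (- x))"

definition inscribed_radii :: "(real^'d \<Rightarrow> real) \<Rightarrow> (real^'d) set \<Rightarrow> real set" where
  "inscribed_radii N K = {t. t \<ge> 0 \<and> {y. N y \<le> t} \<subseteq> K}"

lemma chi_eq: "chi N \<A> p = (INF x\<in>{x. N x = 1}. Sup (inscribed_radii N (sym_hull \<A> p x)))"
  unfolding chi_def inscribed_radii_def sym_hull_def orbit_def ..

lemma orbit_uminus: "orbit \<A> p (- x) = (\<lambda>v. - v) ` orbit \<A> p x"
  unfolding orbit_def by (auto simp: matrix_vector_mult_uminus image_image)

lemma orbit_in_sym_hull: "orbit \<A> p x \<subseteq> sym_hull \<A> p x" "orbit \<A> p (- x) \<subseteq> sym_hull \<A> p x"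
  unfolding sym_hull_def by (auto intro: hull_inc)

lemma zero_in_sym_hull: "0 \<in> sym_hull \<A> p x"
proof -
  have "(1/2) *\<^sub>R x + (1/2) *\<^sub>R (- x) \<in> sym_hull \<A> p x"
    using orbit_in_sym_hull[of \<A> p x] in_orbit[of x \<A> p] in_orbit[of "- x" \<A> p]
    unfolding sym_hull_def by (intro convexD[OF convex_convex_hull]) auto
  thus ?thesis by simp
qed

context vec_norm begin

lemma inscribed_radii_bdd: "bounded K \<Longrightarrow> bdd_above (inscribed_radii N K)"
proof -
  assume "bounded K"
  then obtain R where R: "\<And>y. y \<in> K \<Longrightarrow> norm y \<le> R" unfolding bounded_iff by blast
  obtain B where B: "B > 0" "\<And>x. N x \<le> B * norm x" using N_le_norm by blast
  obtain u where u: "N u = 1" using unit_vector_exists by blast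
  show ?thesis
  proof (rule bdd_aboveI[of _ "B * R"])
    fix t assume "t \<in> inscribed_radii N K"
    hence "t \<ge> 0" "t *\<^sub>R u \<in> K" using u unfolding inscribed_radii_def by (auto simp: N_scaleR)
    hence "norm (t *\<^sub>R u) \<le> R" using R by blast
    hence "B * norm (t *\<^sub>R u) \<le> B * R" using B(1) by (simp add: mult_left_mono)
    hence "N (t *\<^sub>R u) \<le> B * R" using B(2) order_trans by blast
    thus "t \<le> B * R" using u \<open>t \<ge> 0\<close> by (simp add: N_scaleR)
  qed
qed

lemma zero_in_inscribed_radii: "0 \<in> K \<Longrightarrow> 0 \<in> inscribed_radii N K"
proof -
  assume "0 \<in> K"
  moreover have "y = 0" if "N y \<le> 0" for y using that N_nonneg[of y] by simp
  ultimately show ?thesis unfolding inscribed_radii_def by auto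
qed

end

context matrix_family begin

lemma compact_sym_hull: "compact (sym_hull \<A> p x)"
  unfolding sym_hull_def orbit_def using finite_prods_upto[OF finite_family]
  by (intro finite_imp_compact_convex_hull) auto

lemma inscribed_radii_sym_hull:
  "bdd_above (inscribed_radii N (sym_hull \<A> p x))" "0 \<in> inscribed_radii N (sym_hull \<A> p x)"
  by (rule inscribed_radii_bdd[OF compact_imp_bounded[OF compact_sym_hull]])
    (rule zero_in_inscribed_radii[OF zero_in_sym_hull])

lemma Sup_inscribed_radii_nonneg: "0 \<le> Sup (inscribed_radii N (sym_hull \<A> p x))"
  by (rule cSup_upper[OF inscribed_radii_sym_hull(2,1)])

lemma chi_le: "N x = 1 \<Longrightarrow> chi N \<A> p \<le> Sup (inscribed_radii N (sym_hull \<A> p x))"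
  unfolding chi_eq
  by (rule cINF_lower[OF bdd_belowI2[of _ 0]]) (simp_all add: Sup_inscribed_radii_nonneg)

lemma chi_ge:
  assumes "\<And>x. N x = 1 \<Longrightarrow> t \<in> inscribed_radii N (sym_hull \<A> p x)"
  shows "t \<le> chi N \<A> p"
  unfolding chi_eq
proof (rule cINF_greatest)
  show "{x. N x = 1} \<noteq> {}" using unit_vector_exists by auto
qed (simp add: assms cSup_upper[OF _ inscribed_radii_sym_hull(1)])

lemma chi_nonneg: "chi N \<A> p \<ge> 0"
  using chi_ge[of 0 p] inscribed_radii_sym_hull(2) by blast

lemma ball_in_sym_hull:
  assumes "N x = 1" "N y \<le> t" "t < chi N \<A> p"
  shows "y \<in> sym_hull \<A> p x"
proof -
  have "t < Sup (inscribed_radii N (sym_hull \<A> p x))" using chi_le[OF assms(1), of p] assms(3) by linarith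
  moreover have "inscribed_radii N (sym_hull \<A> p x) \<noteq> {}" using inscribed_radii_sym_hull(2) by blast
  ultimately obtain t' where "t' \<in> inscribed_radii N (sym_hull \<A> p x)" "t < t'"
    using less_cSupD by blast
  thus ?thesis using assms(2) unfolding inscribed_radii_def by auto
qed

text \<open>No nonzero vector is orthogonal to the whole spanning orbit \<open>\<A>\<^sub>p(x)\<close>.\<close>

lemma orbit_projection_pos:
  assumes irr: "irreducible_set \<A>" and p: "CARD('d) - 1 \<le> p" and "x \<noteq> 0" "u \<noteq> 0"
  shows "0 < (\<Sum>A\<in>prods_upto \<A> p. \<bar>inner u (A *v x)\<bar>)"
proof -
  have "\<exists>A\<in>prods_upto \<A> p. inner u (A *v x) \<noteq> 0"
  proof (rule ccontr)
    assume "\<not> ?thesis"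
    hence "orthogonal u v" if "v \<in> orbit \<A> p x" for v
      using that unfolding orbit_def orthogonal_def by auto
    hence "orthogonal u u" using orbit_spans[OF irr p \<open>x \<noteq> 0\<close>] by (metis UNIV_I orthogonal_to_span)
    thus False using \<open>u \<noteq> 0\<close> by (simp add: orthogonal_def)
  qed
  then obtain A where "A \<in> prods_upto \<A> p" "inner u (A *v x) \<noteq> 0" by blast
  thus ?thesis using finite_prods_upto[OF finite_family] by (intro sum_pos2[of _ A]) auto
qed

text \<open>By compactness this projection is bounded below uniformly in the unit vectors.\<close>

lemma orbit_projection_bound:
  assumes irr: "irreducible_set \<A>" and p: "CARD('d) - 1 \<le> p"
  shows "\<exists>\<delta>>0. \<forall>u x. norm u = 1 \<longrightarrow> N x = 1 \<longrightarrow> \<delta> \<le> (\<Sum>A\<in>prods_upto \<A> p. \<bar>inner u (A *v x)\<bar>)"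
proof -
  define G where "G z = (\<Sum>A\<in>prods_upto \<A> p. \<bar>inner (fst z) (A *v snd z)\<bar>)" for z :: "(real^'d) \<times> (real^'d)"
  let ?D = "sphere (0::real^'d) 1 \<times> {x. N x = 1}"
  have "sphere (0::real^'d) 1 \<noteq> {}" by simp
  hence "?D \<noteq> {}" using unit_vector_exists by auto
  moreover have "compact ?D" using compact_unit_sphere by (intro compact_Times) auto
  moreover have "continuous_on ?D G" unfolding G_def
    by (intro continuous_intros continuous_on_compose2[OF linear_continuous_on[OF
          matrix_vector_mul_bounded_linear]]) auto
  ultimately obtain z0 where z0: "z0 \<in> ?D" "\<forall>z\<in>?D. G z0 \<le> G z"
    using continuous_attains_inf by blast
  have "fst z0 \<noteq> 0" "snd z0 \<noteq> 0" using z0(1) by auto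
  hence "G z0 > 0" using orbit_projection_pos[OF irr p] unfolding G_def by blast
  thus ?thesis using z0(2) unfolding G_def by force
qed

text \<open>Hence \<open>\<chi> > 0\<close>: the symmetric hulls contain a Euclidean, thus an \<open>N\<close>-, ball of fixed radius.\<close>

lemma chi_pos:
  assumes irr: "irreducible_set \<A>" and p: "CARD('d) - 1 \<le> p"
  shows "chi N \<A> p > 0"
proof -
  let ?P = "prods_upto \<A> p"
  obtain \<delta> where \<delta>: "\<delta> > 0"
    "\<And>u x. norm u = 1 \<Longrightarrow> N x = 1 \<Longrightarrow> \<delta> \<le> (\<Sum>A\<in>?P. \<bar>inner u (A *v x)\<bar>)"
    using orbit_projection_bound[OF irr p] by blast
  obtain a where a: "a > 0" "\<And>y. a * norm y \<le> N y" using norm_le_N by blast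
  have P: "finite ?P" "?P \<noteq> {}" using finite_prods_upto[OF finite_family] id_in_prods_upto by auto
  define t0 where "t0 = a * (\<delta> / card ?P)"
  have t0_pos: "t0 > 0" unfolding t0_def using a \<delta> P by (simp add: card_gt_0_iff)
  have "t0 \<in> inscribed_radii N (sym_hull \<A> p x)" if x: "N x = 1" for x
  proof -
    have "norm y \<le> \<delta> / card ?P" if "N y \<le> t0" for y
    proof -
      have "a * norm y \<le> a * (\<delta> / card ?P)" using a(2)[of y] that unfolding t0_def by linarith
      thus ?thesis using a(1) mult_le_cancel_left_pos by blast
    qed
    hence "{y. N y \<le> t0} \<subseteq> cball 0 (\<delta> / card ?P)" by auto
    also have "\<dots> \<subseteq> convex hull ((\<lambda>A. A *v x) ` ?P \<union> (\<lambda>A. - (A *v x)) ` ?P)"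
      using \<delta> x P by (intro cball_in_symmetric_hull) auto
    also have "\<dots> = sym_hull \<A> p x"
      unfolding sym_hull_def orbit_uminus unfolding orbit_def image_image ..
    finally show ?thesis using t0_pos unfolding inscribed_radii_def by auto
  qed
  thus ?thesis using chi_ge t0_pos by (meson less_le_trans)
qed

end

section \<open>The vertex estimate and its iteration\<close>

lemma (in vec_norm) convex_on_N_matrix: "convex_on UNIV (\<lambda>v. N ((C::real^'n^'d) *v v))"
proof (rule convex_onI)
  fix t :: real and u v :: "real^'n" assume "0 < t" "t < 1"
  have "N (C *v ((1 - t) *\<^sub>R u + t *\<^sub>R v)) \<le> N ((1 - t) *\<^sub>R (C *v u)) + N (t *\<^sub>R (C *v v))"
    by (simp add: matrix_vector_right_distrib matrix_vector_mult_scaleR N_triangle)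
  thus "N (C *v ((1 - t) *\<^sub>R u + t *\<^sub>R v)) \<le> (1 - t) * N (C *v u) + t * N (C *v v)"
    using \<open>0 < t\<close> \<open>t < 1\<close> by (simp add: N_scaleR)
qed simp

lemma mult_le_of_smaller:
  fixes a c M :: real
  assumes "0 \<le> a" "0 \<le> M" "\<And>t. 0 \<le> t \<Longrightarrow> t < c \<Longrightarrow> t * a \<le> M"
  shows "c * a \<le> M"
proof (rule dense_le)
  fix y assume y: "y < c * a"
  show "y \<le> M"
  proof (cases "y \<le> 0")
    case False
    hence "a \<noteq> 0" using y by auto
    hence "a > 0" using assms(1) by simp
    hence "0 \<le> y / a" "y / a < c" using False y by (simp_all add: divide_less_eq)
    hence "(y / a) * a \<le> M" by (rule assms(3))
    thus ?thesis using \<open>a > 0\<close> by simp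
  qed (use assms(2) in simp)
qed

context matrix_family begin

text \<open>The convex function \<open>v \<mapsto> N (C v)\<close> attains its maximum over the hull at a vertex.\<close>

lemma sym_hull_bound:
  assumes "v \<in> sym_hull \<A> p x"
  shows "N (C *v v) \<le> Max ((\<lambda>A. N (C *v (A *v x))) ` prods_upto \<A> p)" (is "_ \<le> ?M")
proof -
  have vertex: "N (C *v w) \<le> ?M" if w: "w \<in> orbit \<A> p x \<union> orbit \<A> p (- x)" for w
  proof -
    obtain A where A: "A \<in> prods_upto \<A> p" "w = A *v x \<or> w = A *v (- x)"
      using w unfolding orbit_def by blast
    hence "N (C *v w) = N (C *v (A *v x))" by (auto simp: matrix_vector_mult_uminus)
    have "N (C *v (A *v x)) \<le> ?M"
      using finite_prods_upto[OF finite_family] A(1) by (intro Max_ge) auto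
    thus ?thesis using \<open>N (C *v w) = N (C *v (A *v x))\<close> by simp
  qed
  have "convex_on (sym_hull \<A> p x) (\<lambda>v. N (C *v v))"
    by (rule convex_on_subset[OF convex_on_N_matrix]) (simp_all add: sym_hull_def)
  thus ?thesis using convex_on_convex_hull_bound vertex assms unfolding sym_hull_def by blast
qed

lemma vertex_estimate:
  assumes x: "N x = 1"
  shows "\<exists>A\<in>prods_upto \<A> p. chi N \<A> p * opnorm N C \<le> N (C *v (A *v x))"
proof -
  let ?h = "\<lambda>A. N (C *v (A *v x))"
  define M where "M = Max (?h ` prods_upto \<A> p)"
  obtain A0 where A0: "A0 \<in> prods_upto \<A> p" "M = ?h A0"
    using Max_in[of "?h ` prods_upto \<A> p"] finite_prods_upto[OF finite_family] id_in_prods_upto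
    unfolding M_def by fastforce
  have unit_bound: "chi N \<A> p * N (C *v y) \<le> M" if y: "N y = 1" for y
  proof (rule mult_le_of_smaller)
    fix t assume "0 \<le> t" "t < chi N \<A> p"
    hence "t *\<^sub>R y \<in> sym_hull \<A> p x" using x y by (intro ball_in_sym_hull) (auto simp: N_scaleR)
    hence "N (C *v (t *\<^sub>R y)) \<le> M" unfolding M_def by (rule sym_hull_bound)
    thus "t * N (C *v y) \<le> M" using \<open>0 \<le> t\<close> by (simp add: matrix_vector_mult_scaleR N_scaleR)
  qed (auto simp: N_nonneg A0)
  have "chi N \<A> p * opnorm N C \<le> M"
  proof (cases "chi N \<A> p > 0")
    case True
    have "opnorm N C \<le> M / chi N \<A> p"
      using unit_bound True by (intro opnorm_le) (simp add: field_simps mult.commute)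
    thus ?thesis using True by (simp add: field_simps mult.commute)
  next
    case False
    thus ?thesis using chi_nonneg[of p] opnorm_nonneg[of C] A0(2) N_nonneg by simp
  qed
  thus ?thesis using A0 by auto
qed

text \<open>
  One step of the iteration: composing a norm-maximising product of length \<open>m\<close> with
  the \<open>A\<close> of the vertex estimate multiplies \<open>N z\<close> by at least \<open>\<chi> \<parallel>\<A>\<^sup>m\<parallel>\<close>,
  at the cost of at most \<open>m + p\<close> factors.
\<close>

lemma growth_step:
  "\<exists>k\<le>p. \<exists>Q\<in>prods \<A> (m + k). chi N \<A> p * setnorm N \<A> m * N z \<le> N (Q *v z)"
proof (cases "z = 0")
  case True
  thus ?thesis using prods_nonempty[OF nonempty_family, of m] by (intro exI[of _ 0]) auto
next
  case False
  obtain C where C: "C \<in> prods \<A> m" "setnorm N \<A> m = opnorm N C" using setnorm_attained by blast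
  define u where "u = (1 / N z) *\<^sub>R z"
  obtain A where A: "A \<in> prods_upto \<A> p" "chi N \<A> p * opnorm N C \<le> N (C *v (A *v u))"
    using vertex_estimate[OF N_normalize[OF False]] unfolding u_def by blast
  then obtain k where k: "k \<le> p" "A \<in> prods \<A> k" unfolding prods_upto_def by auto
  have Q: "C ** A \<in> prods \<A> (m + k)" unfolding prods_add using C(1) k(2) by blast
  have "N ((C ** A) *v z) = N (C *v (A *v u)) * N z"
    using N_pos[OF False] unfolding u_def
    by (simp add: matrix_vector_mul_assoc[symmetric] matrix_vector_mult_scaleR N_scaleR)
  moreover have "chi N \<A> p * setnorm N \<A> m * N z \<le> N (C *v (A *v u)) * N z"
    using mult_right_mono[OF A(2) N_nonneg] C(2) by simp
  ultimately have "chi N \<A> p * setnorm N \<A> m * N z \<le> N ((C ** A) *v z)" by simp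
  thus ?thesis using Q k(1) by blast
qed

lemma growth_chain:
  "\<exists>L. j * m \<le> L \<and> L \<le> j * (m + p) \<and>
     (\<exists>Q\<in>prods \<A> L. (chi N \<A> p * setnorm N \<A> m) ^ j * N z \<le> N (Q *v z))"
proof (induction j arbitrary: z)
  case 0
  thus ?case by (intro exI[of _ 0]) auto
next
  case (Suc j)
  let ?c = "chi N \<A> p * setnorm N \<A> m"
  obtain L Q where LQ: "j * m \<le> L" "L \<le> j * (m + p)" "Q \<in> prods \<A> L" "?c ^ j * N z \<le> N (Q *v z)"
    using Suc.IH by blast
  obtain k Q' where kQ': "k \<le> p" "Q' \<in> prods \<A> (m + k)" "?c * N (Q *v z) \<le> N (Q' *v (Q *v z))"
    using growth_step by blast
  have prod: "Q' ** Q \<in> prods \<A> ((m + k) + L)" using prods_add[of \<A> "m + k" L] LQ(3) kQ'(2) by blast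
  have "?c ^ Suc j * N z \<le> ?c * N (Q *v z)"
    using mult_left_mono[OF LQ(4), of ?c] chi_nonneg setnorm_nonneg by (simp add: mult.assoc)
  hence "?c ^ Suc j * N z \<le> N ((Q' ** Q) *v z)"
    using kQ'(3) by (simp add: matrix_vector_mul_assoc)
  thus ?case using prod LQ(1,2) kQ'(1)
    by (intro exI[of _ "(m + k) + L"] conjI bexI[of _ "Q' ** Q"]) auto
qed

end

section \<open>From growth of \<open>\<parallel>\<A>\<^sup>L\<parallel>\<close> to the upper bound\<close>

lemma powr_exponent_between:
  fixes c :: real
  assumes c: "c > 0" and n: "n \<ge> 1" and L: "j * n \<le> L" "L \<le> j * (n + p)" "real L > 0"
  shows "c powr (1 / real (if c \<ge> 1 then n + p else n)) \<le> c powr (real j / real L)"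
proof (cases "c \<ge> 1")
  case True
  have "real L \<le> real j * real (n + p)" using L(2) by (metis of_nat_le_iff of_nat_mult)
  moreover have "real (n + p) > 0" using n by simp
  ultimately have "1 / real (n + p) \<le> real j / real L" using L(3) by (simp add: field_simps)
  thus ?thesis using True by (simp add: powr_mono)
next
  case False
  have "real j * real n \<le> real L" using L(1) by (metis of_nat_le_iff of_nat_mult)
  hence "real j / real L \<le> 1 / real n" using L(3) n by (simp add: field_simps)
  thus ?thesis using False c by (simp add: powr_mono')
qed

context matrix_family begin

lemma jsr_bound_of_growth:
  assumes n: "n \<ge> 1" and c: "c > 0"
    and growth: "\<And>j. \<exists>L. j * n \<le> L \<and> L \<le> j * (n + p) \<and> c ^ j \<le> setnorm N \<A> L"
  shows "c \<le> jsr N \<A> ^ n * max 1 (jsr N \<A> ^ p)"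
proof -
  define k where "k = (if c \<ge> 1 then n + p else n)"
  have k_pos: "k > 0" unfolding k_def using n by simp
  have "c powr (1 / real k) \<le> jsr N \<A>"
  proof (rule jsr_ge_of_frequently_ge)
    fix M
    obtain L where L: "Suc M * n \<le> L" "L \<le> Suc M * (n + p)" "c ^ Suc M \<le> setnorm N \<A> L"
      using growth by blast
    have "Suc M \<le> L" using L(1) n by (metis le_trans mult_le_mono2 mult_1_right)
    hence L_pos: "real L > 0" by simp
    have "c powr (1 / real k) \<le> c powr (real (Suc M) / real L)"
      unfolding k_def by (rule powr_exponent_between[OF c n L(1,2) L_pos])
    also have "\<dots> = (c ^ Suc M) powr (1 / real L)"
      unfolding powr_realpow[OF c, symmetric] powr_powr by simp
    also have "\<dots> \<le> setnorm N \<A> L powr (1 / real L)" using L(3) c by (intro powr_mono2) auto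
    finally show "\<exists>L\<ge>M. c powr (1 / real k) \<le> setnorm N \<A> L powr (1 / real L)"
      using \<open>Suc M \<le> L\<close> by (intro exI[of _ L]) auto
  qed
  hence "(c powr (1 / real k)) ^ k \<le> jsr N \<A> ^ k" by (intro power_mono) auto
  hence "c \<le> jsr N \<A> ^ k" using c k_pos by (simp add: powr_realpow[symmetric] powr_powr)
  also have "\<dots> \<le> jsr N \<A> ^ n * max 1 (jsr N \<A> ^ p)"
  proof -
    have "jsr N \<A> ^ n * 1 \<le> jsr N \<A> ^ n * max 1 (jsr N \<A> ^ p)"
      "jsr N \<A> ^ n * jsr N \<A> ^ p \<le> jsr N \<A> ^ n * max 1 (jsr N \<A> ^ p)"
      using jsr_nonneg by (intro mult_left_mono; simp)+
    thus ?thesis unfolding k_def by (cases "c \<ge> 1") (simp_all add: power_add)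
  qed
  finally show ?thesis .
qed

lemma chi_setnorm_le:
  assumes n: "n \<ge> 1"
  shows "chi N \<A> p * setnorm N \<A> n \<le> jsr N \<A> ^ n * max 1 (jsr N \<A> ^ p)"
proof (cases "chi N \<A> p * setnorm N \<A> n > 0")
  case True
  obtain z where z: "N z = 1" using unit_vector_exists by blast
  show ?thesis
  proof (rule jsr_bound_of_growth[OF n True])
    fix j
    obtain L Q where "j * n \<le> L" "L \<le> j * (n + p)" "Q \<in> prods \<A> L"
      "(chi N \<A> p * setnorm N \<A> n) ^ j \<le> N (Q *v z)"
      using growth_chain[of j n p z] z by auto
    moreover have "N (Q *v z) \<le> setnorm N \<A> L"
      using opnorm_ge[OF z, of Q] setnorm_ge[OF \<open>Q \<in> prods \<A> L\<close>] by linarith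
    ultimately show "\<exists>L. j * n \<le> L \<and> L \<le> j * (n + p) \<and> (chi N \<A> p * setnorm N \<A> n) ^ j \<le> setnorm N \<A> L"
      by force
  qed
next
  case False
  moreover have "0 \<le> jsr N \<A> ^ n * max 1 (jsr N \<A> ^ p)" using jsr_nonneg by simp
  ultimately show ?thesis by linarith
qed

end

lemma root_le_of_le:
  fixes s \<rho> \<eta> :: real
  assumes "0 \<le> s" "0 \<le> \<rho>" "0 < \<eta>" "n \<ge> 1" "s \<le> \<eta> * \<rho> ^ n"
  shows "s powr (1 / real n) \<le> \<eta> powr (1 / real n) * \<rho>"
    and "\<eta> powr (- 1 / real n) * s powr (1 / real n) \<le> \<rho>"
proof -
  have "s powr (1 / real n) \<le> (\<eta> * \<rho> ^ n) powr (1 / real n)"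
    using assms by (intro powr_mono2) auto
  also have "\<dots> = \<eta> powr (1 / real n) * \<rho>"
    using assms by (simp add: powr_mult power_powr_inverse)
  finally show le: "s powr (1 / real n) \<le> \<eta> powr (1 / real n) * \<rho>" .
  have "\<eta> powr (- 1 / real n) * s powr (1 / real n) \<le> \<eta> powr (- 1 / real n) * (\<eta> powr (1 / real n) * \<rho>)"
    using le by (intro mult_left_mono) auto
  also have "\<dots> = \<rho>" using assms(3) by (simp add: powr_add[symmetric])
  finally show "\<eta> powr (- 1 / real n) * s powr (1 / real n) \<le> \<rho>" .
qed

theorem theorem1:
  fixes \<A> :: "(real^'d^'d) set" and N :: "real^'d \<Rightarrow> real" and n p :: nat
  assumes "finite \<A>" and "\<A> \<noteq> {}"
    and "irreducible_set \<A>"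
    and "is_norm N"
    and "n \<ge> 1" and "p \<ge> CARD('d) - 1"
  shows "jsr N \<A> \<le> setnorm N \<A> n powr (1 / real n)
       \<and> setnorm N \<A> n powr (1 / real n)
           \<le> (max 1 (jsr N \<A> ^ p) / chi N \<A> p) powr (1 / real n) * jsr N \<A>
       \<and> (max 1 (setnorm N \<A> 1 ^ p) / chi N \<A> p) powr (- 1 / real n)
           * setnorm N \<A> n powr (1 / real n) \<le> jsr N \<A>"
proof -
  interpret matrix_family N \<A> using assms by unfold_locales
  let ?\<rho> = "jsr N \<A>" and ?s = "setnorm N \<A> n"
  let ?\<eta> = "max 1 (?\<rho> ^ p) / chi N \<A> p" and ?\<nu> = "max 1 (setnorm N \<A> 1 ^ p) / chi N \<A> p"
  have \<chi>: "chi N \<A> p > 0" using chi_pos assms(3,6) by blast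
  have \<eta>_bound: "?s \<le> ?\<eta> * ?\<rho> ^ n"
    using chi_setnorm_le[OF assms(5), of p] \<chi> by (simp add: field_simps)
  have "?\<rho> ^ p \<le> setnorm N \<A> 1 ^ p" using jsr_nonneg jsr_le_setnorm_1 by (intro power_mono)
  hence "?\<eta> \<le> ?\<nu>" using \<chi> by (intro divide_right_mono) auto
  hence \<nu>_bound: "?s \<le> ?\<nu> * ?\<rho> ^ n" using \<eta>_bound jsr_nonneg by (meson mult_right_mono order_trans zero_le_power)
  have pos: "?\<eta> > 0" "?\<nu> > 0" using \<chi> by auto
  show ?thesis
    using jsr_le_root[OF assms(5)] root_le_of_le[OF setnorm_nonneg jsr_nonneg pos(1) assms(5) \<eta>_bound]
      root_le_of_le[OF setnorm_nonneg jsr_nonneg pos(2) assms(5) \<nu>_bound] by blast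
qed

end
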